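(* For contexts $\Gamma,\Theta,\Delta$ and formulas $A,B$: if $\Theta\vdash A$ has a focused derivation and $\Gamma,A,\Delta\vdash B$ has a focused derivation, then $\Gamma,\Theta,\Delta\vdash B$ has a focused derivation.
   Context: Formulas are built from atoms ($p,q,\dots$) by a binary product: every formula is an atom or $A\bullet B$. A context is a finite (possibly empty) list of formulas; commas denote concatenation. A context is irreducible if its leftmost formula is not a product (it is empty or begins with an atom). A focused derivation of a sequent is a finite derivation tree with no undischarged premises using only the rules: ($\bullet L$): from $A,B,\Delta\vdash C$ infer $A\bullet B,\Delta\vdash C$; ($\bullet R^{foc}$): from $\Gamma\vdash A$ and $\Delta\vdash B$ infer $\Gamma,\Delta\vdash A\bullet B$, where $\Gamma$ is irreducible; and ($id^{atm}$): $p\vdash p$ for atoms $p$. *)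

theory Defs
  imports Main
begin

datatype 'a fm = Atm 'a | Prod "'a fm" "'a fm"

fun irreducible :: "'a fm list \<Rightarrow> bool" where
  "irreducible [] = True"
| "irreducible (Atm p # _) = True"
| "irreducible (Prod _ _ # _) = False"

inductive foc :: "'a fm list \<Rightarrow> 'a fm \<Rightarrow> bool" where
  ProdL: "foc (A # B # \<Delta>) C \<Longrightarrow> foc (Prod A B # \<Delta>) C"
| ProdR: "irreducible \<Gamma> \<Longrightarrow> foc \<Gamma> A \<Longrightarrow> foc \<Delta> B \<Longrightarrow> foc (\<Gamma> @ \<Delta>) (Prod A B)"
| IdAtm: "foc [Atm p] (Atm p)"

end

theory Submission
  imports Defs
begin

text \<open>Cut is admissible by induction on the cut formula A, and for fixed A by induction on the
  derivation of the right premise \<open>\<Gamma>, A, \<Delta> \<turnstile> B\<close>. The only principal case is a left rule on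
  \<open>A = X \<bullet> Y\<close>; there one walks up the derivation of \<open>\<Theta> \<turnstile> X \<bullet> Y\<close> through its left rules to the
  right rule that splits \<open>\<Theta>\<close> into \<open>\<Theta>\<^sub>1 \<turnstile> X\<close> and \<open>\<Theta>\<^sub>2 \<turnstile> Y\<close>, and cuts X and Y, which are smaller.
  The focusing side condition survives the cut: if A heads an irreducible context it is an
  atom, and an atom p is derivable only from the context p itself.\<close>

definition cut_admissible :: "'a fm \<Rightarrow> bool" where
  "cut_admissible A \<longleftrightarrow>
     (\<forall>\<Theta> \<Gamma> \<Delta> B. foc \<Theta> A \<longrightarrow> foc (\<Gamma> @ A # \<Delta>) B \<longrightarrow> foc (\<Gamma> @ \<Theta> @ \<Delta>) B)"

lemma cut_admissibleD:
  "cut_admissible A \<Longrightarrow> foc \<Theta> A \<Longrightarrow> foc (\<Gamma> @ A # \<Delta>) B \<Longrightarrow> foc (\<Gamma> @ \<Theta> @ \<Delta>) B"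
  unfolding cut_admissible_def by blast

lemma foc_Atm_context: "foc \<Theta> (Atm p) \<Longrightarrow> \<Theta> = [Atm p]"
  by (induction \<Theta> "Atm p" rule: foc.induct) auto

lemma irreducible_cut:
  assumes "foc \<Theta> A" and "irreducible (\<Gamma> @ A # \<Delta>)"
  shows "irreducible (\<Gamma> @ \<Theta> @ \<Delta>')"
proof (cases \<Gamma>)
  case Nil
  with assms(2) obtain p where "A = Atm p"
    by (cases A) auto
  with Nil foc_Atm_context[of \<Theta> p] assms(1) show ?thesis by simp
next
  case (Cons G \<Gamma>')
  with assms(2) show ?thesis by (cases G) auto
qed

lemma foc_Prod_principal_cut:
  assumes "cut_admissible X" and "cut_admissible Y"
  shows "foc \<Theta> (Prod X Y) \<Longrightarrow> foc (X # Y # \<Delta>) C \<Longrightarrow> foc (\<Theta> @ \<Delta>) C"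
proof (induction \<Theta> "Prod X Y" arbitrary: \<Delta> rule: foc.induct)
  case (ProdL A B \<Theta>)
  then show ?case by (simp add: foc.ProdL)
next
  case (ProdR \<Theta>\<^sub>1 \<Theta>\<^sub>2)
  have "foc ([X] @ \<Theta>\<^sub>2 @ \<Delta>) C"
    using cut_admissibleD[OF assms(2) \<open>foc \<Theta>\<^sub>2 Y\<close>, of "[X]"] \<open>foc (X # Y # \<Delta>) C\<close> by simp
  then have "foc ([] @ \<Theta>\<^sub>1 @ \<Theta>\<^sub>2 @ \<Delta>) C"
    using cut_admissibleD[OF assms(1) \<open>foc \<Theta>\<^sub>1 X\<close>, of "[]"] by simp
  then show ?case by simp
qed

lemma foc_cut_from_principal_cut:
  assumes principal: "\<And>X Y \<Delta> C. A = Prod X Y \<Longrightarrow> foc (X # Y # \<Delta>) C \<Longrightarrow> foc (\<Theta> @ \<Delta>) C"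
    and left: "foc \<Theta> A"
  shows "foc \<Sigma> B \<Longrightarrow> \<Sigma> = \<Gamma> @ A # \<Delta> \<Longrightarrow> foc (\<Gamma> @ \<Theta> @ \<Delta>) B"
proof (induction arbitrary: \<Gamma> \<Delta> rule: foc.induct)
  case (ProdL A\<^sub>1 A\<^sub>2 \<Sigma> C)
  show ?case
  proof (cases \<Gamma>)
    case Nil
    with ProdL show ?thesis using principal by auto
  next
    case (Cons G \<Gamma>')
    with ProdL.prems have G: "G = Prod A\<^sub>1 A\<^sub>2" and \<Sigma>: "\<Sigma> = \<Gamma>' @ A # \<Delta>" by auto
    have "foc ((A\<^sub>1 # A\<^sub>2 # \<Gamma>') @ \<Theta> @ \<Delta>) C"
      using ProdL.IH[of "A\<^sub>1 # A\<^sub>2 # \<Gamma>'" \<Delta>] \<Sigma> by simp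
    then show ?thesis using Cons G foc.ProdL by fastforce
  qed
next
  case (ProdR \<Sigma>\<^sub>1 B\<^sub>1 \<Sigma>\<^sub>2 B\<^sub>2)
  from ProdR.prems consider
      (in_right) \<Gamma>' where "\<Gamma> = \<Sigma>\<^sub>1 @ \<Gamma>'" "\<Sigma>\<^sub>2 = \<Gamma>' @ A # \<Delta>"
    | (in_left) \<Delta>' where "\<Sigma>\<^sub>1 = \<Gamma> @ A # \<Delta>'" "\<Delta> = \<Delta>' @ \<Sigma>\<^sub>2"
    by (auto simp: append_eq_append_conv2 append_eq_Cons_conv)
  then show ?case
  proof cases
    case in_right
    then have "foc (\<Gamma>' @ \<Theta> @ \<Delta>) B\<^sub>2" using ProdR.IH(2) by simp
    with in_right ProdR.hyps(1,2) show ?thesis using foc.ProdR by fastforce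
  next
    case in_left
    then have "foc (\<Gamma> @ \<Theta> @ \<Delta>') B\<^sub>1" using ProdR.IH(1) by simp
    moreover have "irreducible (\<Gamma> @ \<Theta> @ \<Delta>')"
      using irreducible_cut[OF left] ProdR.hyps(1) in_left by simp
    ultimately show ?thesis using in_left ProdR.hyps(3) foc.ProdR by fastforce
  qed
next
  case (IdAtm p)
  then have "\<Gamma> = []" "\<Delta> = []" "A = Atm p" by (auto simp: Cons_eq_append_conv)
  with left show ?case by simp
qed

lemma cut_admissible: "cut_admissible A"
proof (induction A)
  case (Atm p)
  then show ?case
    unfolding cut_admissible_def by (blast intro: foc_cut_from_principal_cut)
next
  case (Prod X Y)
  have "foc (\<Gamma> @ \<Theta> @ \<Delta>) B"
    if "foc \<Theta> (Prod X Y)" "foc (\<Gamma> @ Prod X Y # \<Delta>) B" for \<Theta> \<Gamma> \<Delta> B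
    using foc_cut_from_principal_cut[OF foc_Prod_principal_cut[OF Prod.IH that(1)] that(1) that(2)]
    by simp
  then show ?case unfolding cut_admissible_def by blast
qed

theorem lemma1p14:
  fixes \<Gamma> \<Theta> \<Delta> :: "'a fm list" and A B :: "'a fm"
  assumes "foc \<Theta> A"
    and "foc (\<Gamma> @ [A] @ \<Delta>) B"
  shows "foc (\<Gamma> @ \<Theta> @ \<Delta>) B"
  using cut_admissibleD[OF cut_admissible] assms by simp

end
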